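(* $\{x^2 y : x,y \in \widetilde C\} = [\tfrac{8}{27},1]$.
   Context: $C=\{\sum_{k\ge1}\alpha_k3^{-k}:\alpha_k\in\{0,2\}\}$ is the middle-thirds Cantor set, and $\widetilde C = C\cap[\tfrac23,1] = \tfrac23+\tfrac13C$. *)

theory Defs
  imports "HOL-Analysis.Analysis"
begin

text \<open>Middle-thirds Cantor set: sums of alpha_k 3^(-k), k >= 1, alpha_k in {0,2}.
  Index shifted: alpha n corresponds to digit k = n+1.\<close>
definition cantor_set :: "real set" where
  "cantor_set = {(\<Sum>n. real (\<alpha> n) / 3 ^ (Suc n)) | \<alpha> :: nat \<Rightarrow> nat. \<forall>n. \<alpha> n \<in> {0, 2}}"

definition cantor_tilde :: "real set" where
  "cantor_tilde = cantor_set \<inter> {2/3..1}"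

end

theory Submission
  imports Defs
begin

(* Since x^2 y is increasing in both variables, t lies in the image of the square
   [a, a+d] x [b, b+d] as soon as a^2 b <= t <= (a+d)^2 (b+d).  Starting from
   [2/3, 1]^2, such a bracketing square can always be replaced by one of the four
   sub-squares obtained by keeping the left or right third in each coordinate: the
   ranges of x^2 y over the kept thirds overlap, because 2/3 <= x, y <= 1.  The
   nested squares shrink to a point (x, y) of the product of Cantor sets with
   x^2 y = t. *)

lemma sq_mul_mem_if_mem_thirds:
  fixes x y :: real
  assumes "x \<in> {2/3..1}" "y \<in> {2/3..1}"
  shows "x^2 * y \<in> {8/27..1}"
proof -
  have "(2/3)^2 * (2/3) \<le> x^2 * y" using assms by (intro mult_mono power_mono) auto
  moreover have "x^2 * y \<le> 1^2 * 1" using assms by (intro mult_mono power_mono) auto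
  ultimately show ?thesis by (simp add: power2_eq_square)
qed

lemma ternary_steps_converge_in_cantor_set:
  fixes c :: "nat \<Rightarrow> real"
  assumes "c 0 \<in> {0, 2/3}" and "\<And>m. c (Suc m) \<in> {c m, c m + 2 / 3 ^ Suc (Suc m)}"
  shows "\<exists>x\<in>cantor_set. c \<longlonglongrightarrow> x"
proof -
  define \<alpha> :: "nat \<Rightarrow> nat" where
    "\<alpha> n = (if c n = (case n of 0 \<Rightarrow> 0 | Suc m \<Rightarrow> c m) then 0 else 2)" for n
  let ?f = "\<lambda>j. real (\<alpha> j) / 3 ^ Suc j"
  have digits: "\<forall>n. \<alpha> n \<in> {0, 2}" by (simp add: \<alpha>_def)
  have partial_sums: "c m = (\<Sum>j<Suc m. ?f j)" for m
    by (induction m) (use assms in \<open>auto simp: \<alpha>_def\<close>)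
  have "summable ?f"
  proof (rule summable_comparison_test')
    show "summable (\<lambda>j. (1/3::real) ^ j)" by simp
    show "norm (?f j) \<le> (1/3) ^ j" for j
      using digits[rule_format, of j] by (auto simp: field_simps)
  qed
  then have "(\<lambda>m. \<Sum>j<Suc m. ?f j) \<longlonglongrightarrow> suminf ?f"
    by (intro LIMSEQ_Suc summable_LIMSEQ)
  moreover have "suminf ?f \<in> cantor_set" unfolding cantor_set_def using digits by blast
  ultimately show ?thesis unfolding partial_sums by blast
qed

definition bracketing_box :: "real \<Rightarrow> real \<Rightarrow> real \<Rightarrow> real \<Rightarrow> bool" where
  "bracketing_box t a b d \<longleftrightarrow>
     2/3 \<le> a \<and> 2/3 \<le> b \<and> a + d \<le> 1 \<and> b + d \<le> 1 \<and> a^2 * b \<le> t \<and> t \<le> (a + d)^2 * (b + d)"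

(* (a, b) is the lower corner of a box of side 3 e; the x-third is chosen first, the
   y-third is then chosen inside it. *)
definition refine_box :: "real \<Rightarrow> real \<Rightarrow> real \<times> real \<Rightarrow> real \<times> real" where
  "refine_box t e = (\<lambda>(a, b).
     let a' = (if t \<le> (a + e)^2 * (b + 3*e) then a else a + 2*e)
     in (a', if t \<le> (a' + e)^2 * (b + e) then b else b + 2*e))"

lemma right_third_below_left_third_fst:
  fixes a b e :: real
  assumes "2/3 \<le> a" "0 \<le> b" "b \<le> 1" "0 \<le> e"
  shows "(a + 2*e)^2 * b \<le> (a + e)^2 * (b + 3*e)"
proof -
  have "2*a + 3*e \<le> 3*(a + e)^2"
  proof -
    have "0 \<le> a*(3*a - 2) + e*(6*a - 3) + 3*e^2" using assms by simp
    then show ?thesis by (simp add: power2_eq_square algebra_simps)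
  qed
  moreover have "b*(2*a + 3*e) \<le> 2*a + 3*e" using assms by (simp add: mult_left_le_one_le)
  ultimately have "e*(b*(2*a + 3*e)) \<le> e*(3*(a + e)^2)"
    using assms(4) by (simp add: mult_left_mono)
  then show ?thesis by (simp add: power2_eq_square algebra_simps)
qed

lemma right_third_below_left_third_snd:
  fixes a b e :: real
  assumes "0 \<le> a" "a \<le> 1" "2/3 \<le> b" "0 \<le> e"
  shows "a^2 * (b + 2*e) \<le> (a + e)^2 * (b + e)"
proof -
  have "a*a \<le> a*(2*b)" using assms by (intro mult_left_mono) auto
  also have "\<dots> \<le> (2*a + e)*(b + e)" using assms by (simp add: algebra_simps)
  finally have "e*a^2 \<le> e*((2*a + e)*(b + e))"
    using assms(4) by (simp add: power2_eq_square mult_left_mono)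
  then show ?thesis by (simp add: power2_eq_square algebra_simps)
qed

lemma bracketing_box_refine:
  assumes box: "bracketing_box t a b (3*e)" and "0 \<le> e"
  shows "bracketing_box t (fst (refine_box t e (a, b))) (snd (refine_box t e (a, b))) e"
proof -
  define a' where "a' = (if t \<le> (a + e)^2 * (b + 3*e) then a else a + 2*e)"
  define b' where "b' = (if t \<le> (a' + e)^2 * (b + e) then b else b + 2*e)"
  have a': "2/3 \<le> a' \<and> a' + e \<le> 1 \<and> a'^2 * b \<le> t \<and> t \<le> (a' + e)^2 * (b + 3*e)"
  proof (cases "t \<le> (a + e)^2 * (b + 3*e)")
    case True
    then show ?thesis using box \<open>0 \<le> e\<close> by (simp add: a'_def bracketing_box_def)
  next
    case False
    moreover have "(a + 2*e)^2 * b \<le> (a + e)^2 * (b + 3*e)"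
      using box \<open>0 \<le> e\<close> by (intro right_third_below_left_third_fst) (auto simp: bracketing_box_def)
    ultimately show ?thesis
      using box \<open>0 \<le> e\<close> by (simp add: a'_def bracketing_box_def algebra_simps)
  qed
  have "2/3 \<le> b' \<and> b' + e \<le> 1 \<and> a'^2 * b' \<le> t \<and> t \<le> (a' + e)^2 * (b' + e)"
  proof (cases "t \<le> (a' + e)^2 * (b + e)")
    case True
    then show ?thesis using box a' \<open>0 \<le> e\<close> by (simp add: b'_def bracketing_box_def)
  next
    case False
    moreover have "a'^2 * (b + 2*e) \<le> (a' + e)^2 * (b + e)"
      using box a' \<open>0 \<le> e\<close> by (intro right_third_below_left_third_snd) (auto simp: bracketing_box_def)
    ultimately show ?thesis
      using box a' \<open>0 \<le> e\<close> by (simp add: b'_def bracketing_box_def algebra_simps)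
  qed
  moreover have "refine_box t e (a, b) = (a', b')"
    by (simp add: refine_box_def a'_def b'_def Let_def)
  ultimately show ?thesis using a' by (simp add: bracketing_box_def)
qed

fun box_corner :: "real \<Rightarrow> nat \<Rightarrow> real \<times> real" where
  "box_corner t 0 = (2/3, 2/3)"
| "box_corner t (Suc m) = refine_box t (1 / 3 ^ Suc (Suc m)) (box_corner t m)"

lemma bracketing_box_corner:
  assumes "t \<in> {8/27..1}"
  shows "bracketing_box t (fst (box_corner t m)) (snd (box_corner t m)) (1 / 3 ^ Suc m)"
proof (induction m)
  case 0
  then show ?case using assms by (simp add: bracketing_box_def power2_eq_square)
next
  case (Suc m)
  have "(1::real) / 3 ^ Suc m = 3 * (1 / 3 ^ Suc (Suc m))" by simp
  with Suc.IH have "bracketing_box t (fst (box_corner t m)) (snd (box_corner t m))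
      (3 * (1 / 3 ^ Suc (Suc m)))" by simp
  from bracketing_box_refine[OF this] show ?case by simp
qed

lemma box_corner_steps:
  "fst (box_corner t (Suc m)) \<in> {fst (box_corner t m), fst (box_corner t m) + 2 / 3 ^ Suc (Suc m)}"
  "snd (box_corner t (Suc m)) \<in> {snd (box_corner t m), snd (box_corner t m) + 2 / 3 ^ Suc (Suc m)}"
  by (simp_all add: refine_box_def Let_def prod.case_eq_if)

lemma bracketing_box_limit:
  assumes box: "\<And>m. bracketing_box t (a m) (b m) (d m)"
    and a: "a \<longlonglongrightarrow> x" and b: "b \<longlonglongrightarrow> y" and d: "d \<longlonglongrightarrow> 0"
  shows "x \<in> {2/3..1}" "y \<in> {2/3..1}" "x^2 * y = t"
proof -
  have ad: "(\<lambda>m. a m + d m) \<longlonglongrightarrow> x" and bd: "(\<lambda>m. b m + d m) \<longlonglongrightarrow> y"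
    using tendsto_add[OF a d] tendsto_add[OF b d] by simp_all
  have "2/3 \<le> x" by (rule LIMSEQ_le_const[OF a]) (use box in \<open>auto simp: bracketing_box_def\<close>)
  moreover have "x \<le> 1" by (rule LIMSEQ_le_const2[OF ad]) (use box in \<open>auto simp: bracketing_box_def\<close>)
  moreover have "2/3 \<le> y" by (rule LIMSEQ_le_const[OF b]) (use box in \<open>auto simp: bracketing_box_def\<close>)
  moreover have "y \<le> 1" by (rule LIMSEQ_le_const2[OF bd]) (use box in \<open>auto simp: bracketing_box_def\<close>)
  ultimately show "x \<in> {2/3..1}" "y \<in> {2/3..1}" by auto
  have "x^2 * y \<le> t"
    by (rule LIMSEQ_le_const2[OF tendsto_mult[OF tendsto_power[OF a] b]])
      (use box in \<open>auto simp: bracketing_box_def\<close>)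
  moreover have "t \<le> x^2 * y"
    by (rule LIMSEQ_le_const[OF tendsto_mult[OF tendsto_power[OF ad] bd]])
      (use box in \<open>auto simp: bracketing_box_def\<close>)
  ultimately show "x^2 * y = t" by simp
qed

theorem theorem3p5:
  shows "{x ^ 2 * y | x y. x \<in> cantor_tilde \<and> y \<in> cantor_tilde} = {8/27..(1::real)}"
proof
  show "{x ^ 2 * y | x y. x \<in> cantor_tilde \<and> y \<in> cantor_tilde} \<subseteq> {8/27..(1::real)}"
    using sq_mul_mem_if_mem_thirds by (auto simp: cantor_tilde_def)
next
  show "{8/27..1} \<subseteq> {x ^ 2 * y | x y. x \<in> cantor_tilde \<and> y \<in> cantor_tilde}"
  proof
    fix t :: real
    assume t: "t \<in> {8/27..1}"
    obtain x where x: "x \<in> cantor_set" "(\<lambda>m. fst (box_corner t m)) \<longlonglongrightarrow> x"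
      using ternary_steps_converge_in_cantor_set[of "\<lambda>m. fst (box_corner t m)"] box_corner_steps(1)
      by auto
    obtain y where y: "y \<in> cantor_set" "(\<lambda>m. snd (box_corner t m)) \<longlonglongrightarrow> y"
      using ternary_steps_converge_in_cantor_set[of "\<lambda>m. snd (box_corner t m)"] box_corner_steps(2)
      by auto
    have "(\<lambda>m. 1 / 3 ^ Suc m :: real) \<longlonglongrightarrow> 0"
      by (intro LIMSEQ_Suc LIMSEQ_divide_realpow_zero) simp_all
    from bracketing_box_limit[OF bracketing_box_corner[OF t] x(2) y(2) this]
    show "t \<in> {x ^ 2 * y | x y. x \<in> cantor_tilde \<and> y \<in> cantor_tilde}"
      using x(1) y(1) unfolding cantor_tilde_def by blast
  qed
qed

end
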